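(* Assume $p,q\in[0,1]$. For all $n\ge2$, almost surely, $$\widetilde M_n-\widetilde L_n\le Y_n-Z_n\le M_n.$$
   Context: Ulam–Harris labels: $\mathcal U_n=\mathbb N^n$ ($n\ge0$, $\mathcal U_0=\{\emptyset\}$), $\mathcal U=\bigcup_{n\ge0}\mathcal U_n$; for $u=u_1\dots u_k$ write $ui=u_1\dots u_ki$. Let $(\xi_u)_{u\in\mathcal U}$ be i.i.d. Poisson with mean $1+p$, and $(\delta_{u,v})_{u,v\in\mathcal U}$, $(\mu_{\{u,v\}})_{u\ne v\in\mathcal U}$ i.i.d. Bernoulli with mean $q$, all independent. The process $\mathcal G(p,q)=(G_n)_{n\ge0}$, $G_n=(V_n,E_n)$: $G_0=(\{\emptyset\},\emptyset)$, and $I_m=V_m\cap\mathcal U_m$. Given $G_{n-1}$ ($n\ge1$): (1) for $u\in I_{n-1}$ let $\mathcal K_u=\{v\in V_{n-1}:d_{G_{n-1}}(u,v)=3\}$ and $\mathcal C_u=\{j\in\mathbb N:j\le\xi_u,\ \delta_{v,uj}=0\ \forall v\in\mathcal K_u\}$; let $\tilde G_n$ have vertex set $V_{n-1}\cup\{ui:u\in I_{n-1},i\in\mathcal C_u\}$ and edge set $E_{n-1}\cup\{\{u,ui\}:u\in I_{n-1},i\in\mathcal C_u\}$, and $\tilde I_n$ its set of vertices in $\mathcal U_n$. (2) For $u,v\in\tilde I_n$ write $u\overset{m}{\sim}v$ iff $d_{\tilde G_n}(u,v)=4$ and $\mu_{\{u,v\}}=1$; let $\sim$ be the equivalence relation on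 $\tilde I_n$ generated by $\overset m\sim$, and $\pi(u)$ the lexicographically smallest element of the class of $u$. Then $V_n=V_{n-1}\cup\{\pi(u):u\in\tilde I_n\}$, $E_n=E_{n-1}\cup\{\{v,\pi(vi)\}:v\in I_{n-1},i\in\mathcal C_v\}$. Let $Z_n=|I_n|$ and $Y_n=\sum_{u\in I_{n-1}}|\mathcal C_u|=|\tilde I_n|$. For $\tilde u\in\tilde I_n$, $\tilde\alpha(\tilde u)=\{\tilde u\}\cup\bigcup_{1\le j\le n}\{x\in I_{n-j}:d_{\tilde G_n}(x,\tilde u)=j\}$ and $\tilde\alpha_2(\tilde u)=\tilde\alpha(\tilde u)\cap I_{n-2}$; $\tilde J^{(2)}_n=\{\tilde u\in\tilde I_n:|\tilde\alpha_2(\tilde u)|=1\}$. $M_n=|\{\{u,v\}:u,v\in\tilde I_n,\ u\overset m\sim v\}|$, $\widetilde M_n=|\{\{u,v\}:u,v\in\tilde J^{(2)}_n,\ u\overset m\sim v\}|$, and $\widetilde L_n=|\{(u,v,w)\in(\tilde J^{(2)}_n)^3:u\overset m\sim v,\ v\overset m\sim w,\ u\ne w\}|$. *)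

theory Defs
  imports "HOL-Probability.Probability" "HOL-Library.List_Lexorder"
begin

(* Ulam-Harris labels: lists of positive naturals *)
type_synonym lab = "nat list"
type_synonym graph = "lab set \<times> lab set set"
type_synonym omega = "(lab \<Rightarrow> nat) \<times> ((lab \<times> lab) \<Rightarrow> bool) \<times> (lab set \<Rightarrow> bool)"

definition ULab :: "lab set" where
  "ULab = {u. \<forall>i\<in>set u. 0 < i}"

definition UPairs :: "lab set set" where
  "UPairs = {{u, v} | u v. u \<in> ULab \<and> v \<in> ULab \<and> u \<noteq> v}"

definition Pspace :: "real \<Rightarrow> real \<Rightarrow> omega measure" where
  "Pspace p q =
     (PiM ULab (\<lambda>_. measure_pmf (poisson_pmf (1 + p))))
     \<Otimes>\<^sub>M ((PiM (ULab \<times> ULab) (\<lambda>_. measure_pmf (bernoulli_pmf q)))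
     \<Otimes>\<^sub>M (PiM UPairs (\<lambda>_. measure_pmf (bernoulli_pmf q))))"

definition xi_of :: "omega \<Rightarrow> lab \<Rightarrow> nat" where "xi_of \<omega> = fst \<omega>"
definition delta_of :: "omega \<Rightarrow> lab \<times> lab \<Rightarrow> bool" where "delta_of \<omega> = fst (snd \<omega>)"
definition mu_of :: "omega \<Rightarrow> lab set \<Rightarrow> bool" where "mu_of \<omega> = snd (snd \<omega>)"

fun walkn :: "lab set set \<Rightarrow> nat \<Rightarrow> lab \<Rightarrow> lab \<Rightarrow> bool" where
  "walkn E 0 u v = (u = v)"
| "walkn E (Suc k) u v = (\<exists>w. {u, w} \<in> E \<and> walkn E k w v)"

definition has_dist :: "lab set set \<Rightarrow> lab \<Rightarrow> lab \<Rightarrow> nat \<Rightarrow> bool" where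
  "has_dist E u v d \<longleftrightarrow> walkn E d u v \<and> (\<forall>k<d. \<not> walkn E k u v)"

definition Gen :: "nat \<Rightarrow> lab set \<Rightarrow> lab set" where
  "Gen m V = {u \<in> V. length u = m}"

definition Kset :: "graph \<Rightarrow> lab \<Rightarrow> lab set" where
  "Kset G u = {v \<in> fst G. has_dist (snd G) u v 3}"

(* C_u, computed from G_{n-1} *)
definition Cset :: "omega \<Rightarrow> graph \<Rightarrow> lab \<Rightarrow> nat set" where
  "Cset \<omega> G u = {j. 1 \<le> j \<and> j \<le> xi_of \<omega> u \<and> (\<forall>v\<in>Kset G u. \<not> delta_of \<omega> (v, u @ [j]))}"

(* tilde G_n from G = G_{n-1} *)
definition tilde_graph :: "omega \<Rightarrow> nat \<Rightarrow> graph \<Rightarrow> graph" where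
  "tilde_graph \<omega> n G =
    (let I = Gen (n - 1) (fst G) in
     (fst G \<union> {u @ [i] | u i. u \<in> I \<and> i \<in> Cset \<omega> G u},
      snd G \<union> {{u, u @ [i]} | u i. u \<in> I \<and> i \<in> Cset \<omega> G u}))"

definition msim :: "omega \<Rightarrow> graph \<Rightarrow> lab \<Rightarrow> lab \<Rightarrow> bool" where
  "msim \<omega> Gt u v \<longleftrightarrow> has_dist (snd Gt) u v 4 \<and> mu_of \<omega> {u, v}"

definition simrel :: "omega \<Rightarrow> nat \<Rightarrow> graph \<Rightarrow> (lab \<times> lab) set" where
  "simrel \<omega> n Gt =
     (let It = Gen n (fst Gt) in
      {(u, v). u \<in> It \<and> v \<in> It \<and>
        (u, v) \<in> ({(x, y). x \<in> It \<and> y \<in> It \<and> (msim \<omega> Gt x y \<or> msim \<omega> Gt y x)})\<^sup>*})"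

(* pi(u): lexicographically smallest element of the class of u *)
definition piu :: "omega \<Rightarrow> nat \<Rightarrow> graph \<Rightarrow> lab \<Rightarrow> lab" where
  "piu \<omega> n Gt u = Min {v. (u, v) \<in> simrel \<omega> n Gt}"

definition next_graph :: "omega \<Rightarrow> nat \<Rightarrow> graph \<Rightarrow> graph" where
  "next_graph \<omega> n G =
    (let Gt = tilde_graph \<omega> n G; I = Gen (n - 1) (fst G) in
     (fst G \<union> piu \<omega> n Gt ` Gen n (fst Gt),
      snd G \<union> {{v, piu \<omega> n Gt (v @ [i])} | v i. v \<in> I \<and> i \<in> Cset \<omega> G v}))"

fun Gproc :: "omega \<Rightarrow> nat \<Rightarrow> graph" where
  "Gproc \<omega> 0 = ({[]}, {})"
| "Gproc \<omega> (Suc n) = next_graph \<omega> (Suc n) (Gproc \<omega> n)"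

definition Iset :: "omega \<Rightarrow> nat \<Rightarrow> lab set" where
  "Iset \<omega> m = Gen m (fst (Gproc \<omega> m))"

definition Gtil :: "omega \<Rightarrow> nat \<Rightarrow> graph" where
  "Gtil \<omega> n = tilde_graph \<omega> n (Gproc \<omega> (n - 1))"

definition Itil :: "omega \<Rightarrow> nat \<Rightarrow> lab set" where
  "Itil \<omega> n = Gen n (fst (Gtil \<omega> n))"

definition Zn :: "omega \<Rightarrow> nat \<Rightarrow> nat" where
  "Zn \<omega> n = card (Iset \<omega> n)"

definition Yn :: "omega \<Rightarrow> nat \<Rightarrow> nat" where
  "Yn \<omega> n = (\<Sum>u\<in>Iset \<omega> (n - 1). card (Cset \<omega> (Gproc \<omega> (n - 1)) u))"

definition alpha_t :: "omega \<Rightarrow> nat \<Rightarrow> lab \<Rightarrow> lab set" where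
  "alpha_t \<omega> n ut = {ut} \<union> (\<Union>j\<in>{1..n}. {x \<in> Iset \<omega> (n - j). has_dist (snd (Gtil \<omega> n)) x ut j})"

definition alpha2_t :: "omega \<Rightarrow> nat \<Rightarrow> lab \<Rightarrow> lab set" where
  "alpha2_t \<omega> n ut = alpha_t \<omega> n ut \<inter> Iset \<omega> (n - 2)"

definition J2 :: "omega \<Rightarrow> nat \<Rightarrow> lab set" where
  "J2 \<omega> n = {ut \<in> Itil \<omega> n. card (alpha2_t \<omega> n ut) = 1}"

definition Mn :: "omega \<Rightarrow> nat \<Rightarrow> nat" where
  "Mn \<omega> n = card {{u, v} | u v. u \<in> Itil \<omega> n \<and> v \<in> Itil \<omega> n \<and> msim \<omega> (Gtil \<omega> n) u v}"

definition Mt :: "omega \<Rightarrow> nat \<Rightarrow> nat" where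
  "Mt \<omega> n = card {{u, v} | u v. u \<in> J2 \<omega> n \<and> v \<in> J2 \<omega> n \<and> msim \<omega> (Gtil \<omega> n) u v}"

definition Lt :: "omega \<Rightarrow> nat \<Rightarrow> nat" where
  "Lt \<omega> n = card {(u, v, w). u \<in> J2 \<omega> n \<and> v \<in> J2 \<omega> n \<and> w \<in> J2 \<omega> n \<and>
                     msim \<omega> (Gtil \<omega> n) u v \<and> msim \<omega> (Gtil \<omega> n) v w \<and> u \<noteq> w}"

end

theory Submission
  imports Defs
begin

(* Y_n counts the vertices of tilde I_n and Z_n the classes of the merging relation ~, so
   Y_n - Z_n is the number of vertices of tilde I_n that are not the minimum of their class.
   Each such vertex can be charged to an m-edge towards a vertex strictly closer to its class
   minimum; no edge is charged twice, whence Y_n - Z_n <= M_n.  Conversely, an m-edge inside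
   tilde J^(2)_n sharing no endpoint with another one joins two distinct vertices of one class,
   so it contains a non-minimum, and these edges are disjoint; every other such edge is the
   first edge of a path u ~ v ~ w counted by tilde L_n.  Both bounds hold for every
   realisation, hence almost surely. *)

definition link :: "'a set \<Rightarrow> ('a \<Rightarrow> 'a \<Rightarrow> bool) \<Rightarrow> ('a \<times> 'a) set" where
  "link T M = {(x, y). x \<in> T \<and> y \<in> T \<and> (M x y \<or> M y x)}"

definition connected_within :: "'a set \<Rightarrow> ('a \<Rightarrow> 'a \<Rightarrow> bool) \<Rightarrow> ('a \<times> 'a) set" where
  "connected_within T M = {(u, v). u \<in> T \<and> v \<in> T \<and> (u, v) \<in> (link T M)\<^sup>*}"

definition class_min :: "'a::linorder set \<Rightarrow> ('a \<Rightarrow> 'a \<Rightarrow> bool) \<Rightarrow> 'a \<Rightarrow> 'a" where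
  "class_min T M u = Min {v. (u, v) \<in> connected_within T M}"

definition class_min_distance :: "'a::linorder set \<Rightarrow> ('a \<Rightarrow> 'a \<Rightarrow> bool) \<Rightarrow> 'a \<Rightarrow> nat" where
  "class_min_distance T M u = (LEAST k. (u, class_min T M u) \<in> link T M ^^ k)"

definition edges :: "'a set \<Rightarrow> ('a \<Rightarrow> 'a \<Rightarrow> bool) \<Rightarrow> 'a set set" where
  "edges T M = {{u, v} | u v. u \<in> T \<and> v \<in> T \<and> M u v}"

definition isolated_edges :: "'a set \<Rightarrow> ('a \<Rightarrow> 'a \<Rightarrow> bool) \<Rightarrow> 'a set set" where
  "isolated_edges T M = {e \<in> edges T M. \<forall>e' \<in> edges T M. e' \<noteq> e \<longrightarrow> e \<inter> e' = {}}"

definition paths2 :: "'a set \<Rightarrow> ('a \<Rightarrow> 'a \<Rightarrow> bool) \<Rightarrow> ('a \<times> 'a \<times> 'a) set" where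
  "paths2 T M = {(u, v, w). u \<in> T \<and> v \<in> T \<and> w \<in> T \<and> M u v \<and> M v w \<and> u \<noteq> w}"

lemma equiv_connected_within: "equiv T (connected_within T M)"
proof -
  have "sym (link T M)"
    unfolding link_def sym_def by blast
  then have "sym ((link T M)\<^sup>*)"
    by (rule sym_rtrancl)
  then show ?thesis
    unfolding equiv_def refl_on_def sym_def trans_def connected_within_def
    by (auto intro: rtrancl_trans)
qed

lemma link_imp_connected_within: "(u, v) \<in> link T M \<Longrightarrow> (u, v) \<in> connected_within T M"
  unfolding connected_within_def by (auto simp: link_def)

lemma class_min_connected:
  assumes "finite T" "u \<in> T"
  shows "(u, class_min T M u) \<in> connected_within T M"
proof -
  let ?C = "{v. (u, v) \<in> connected_within T M}"
  have "?C \<subseteq> T"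
    unfolding connected_within_def by blast
  moreover have "u \<in> ?C"
    using equiv_class_self[OF equiv_connected_within assms(2)] by (simp add: Image_singleton)
  ultimately have "Min ?C \<in> ?C"
    using assms(1) by (intro Min_in) (auto dest: finite_subset)
  then show ?thesis
    unfolding class_min_def by simp
qed

lemma class_min_in:
  assumes "finite T" "u \<in> T"
  shows "class_min T M u \<in> T"
  using class_min_connected[OF assms] unfolding connected_within_def by blast

lemma class_min_image_subset: "finite T \<Longrightarrow> class_min T M ` T \<subseteq> T"
  using class_min_in by blast

lemma class_min_eq:
  assumes "(u, v) \<in> connected_within T M"
  shows "class_min T M u = class_min T M v"
  using equiv_class_eq[OF equiv_connected_within assms]
  unfolding class_min_def by (simp add: Image_singleton)

lemma class_min_class_min:
  assumes "finite T" "u \<in> T"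
  shows "class_min T M (class_min T M u) = class_min T M u"
  using class_min_eq[OF class_min_connected[OF assms]] by simp

lemma finite_edges: "finite T \<Longrightarrow> finite (edges T M)"
  by (rule finite_subset[of _ "(\<lambda>(u, v). {u, v}) ` (T \<times> T)"]) (auto simp: edges_def)

lemma finite_paths2: "finite T \<Longrightarrow> finite (paths2 T M)"
  by (rule finite_subset[of _ "T \<times> T \<times> T"]) (auto simp: paths2_def)

lemma link_step_towards_class_min:
  assumes "finite T" "u \<in> T" "class_min T M u \<noteq> u"
  obtains v where "(u, v) \<in> link T M" "class_min_distance T M v < class_min_distance T M u"
proof -
  let ?R = "link T M" and ?d = "class_min_distance T M u"
  have "(u, class_min T M u) \<in> ?R\<^sup>*"
    using class_min_connected[OF assms(1,2)] unfolding connected_within_def by blast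
  then obtain k where "(u, class_min T M u) \<in> ?R ^^ k"
    by (blast dest: rtrancl_imp_relpow)
  then have path: "(u, class_min T M u) \<in> ?R ^^ ?d"
    unfolding class_min_distance_def by (rule LeastI)
  with assms(3) have "?d \<noteq> 0"
    by (metis relpow_0_E)
  with path obtain v where v: "(u, v) \<in> ?R" "(v, class_min T M u) \<in> ?R ^^ (?d - 1)"
    by (metis Suc_pred' not_gr0 relpow_Suc_D2)
  have "class_min T M v = class_min T M u"
    using class_min_eq[OF link_imp_connected_within[OF v(1)]] by simp
  with v(2) have "class_min_distance T M v \<le> ?d - 1"
    unfolding class_min_distance_def[of T M v] by (metis Least_le)
  with \<open>?d \<noteq> 0\<close> v(1) show thesis
    using that by simp
qed

lemma card_non_class_min_le_card_edges:
  assumes "finite T"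
  shows "card (T - class_min T M ` T) \<le> card (edges T M)"
proof -
  let ?N = "T - class_min T M ` T" and ?d = "class_min_distance T M"
  have "\<exists>v. (u, v) \<in> link T M \<and> ?d v < ?d u" if "u \<in> ?N" for u
  proof -
    from that have "u \<in> T" "class_min T M u \<noteq> u"
      by (metis DiffE image_eqI)+
    then show ?thesis
      using link_step_towards_class_min[OF assms] by metis
  qed
  then obtain f where f: "\<And>u. u \<in> ?N \<Longrightarrow> (u, f u) \<in> link T M \<and> ?d (f u) < ?d u"
    by metis
  have "inj_on (\<lambda>u. {u, f u}) ?N"
  proof (rule inj_onI)
    fix x y assume "x \<in> ?N" "y \<in> ?N" "{x, f x} = {y, f y}"
    with f[of x] f[of y] show "x = y"
      by (metis doubleton_eq_iff less_asym)
  qed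
  moreover have "(\<lambda>u. {u, f u}) ` ?N \<subseteq> edges T M"
    using f unfolding link_def edges_def by (fastforce simp: insert_commute)
  ultimately show ?thesis
    using finite_edges[OF assms] by (rule card_inj_on_le)
qed

lemma card_non_isolated_edges_le_card_paths2:
  assumes "finite J" and sym: "\<And>x y. M x y \<Longrightarrow> M y x"
  shows "card (edges J M - isolated_edges J M) \<le> card (paths2 J M)"
proof -
  have "edges J M - isolated_edges J M \<subseteq> (\<lambda>(x, y, z). {x, y}) ` paths2 J M"
  proof
    fix e assume "e \<in> edges J M - isolated_edges J M"
    then obtain e' y where e: "e \<in> edges J M" and e': "e' \<in> edges J M" "e' \<noteq> e"
      and y: "y \<in> e" "y \<in> e'"
      unfolding isolated_edges_def by blast
    have through_y: "\<exists>x \<in> J. c = {x, y} \<and> M x y \<and> y \<in> J" if "c \<in> edges J M" "y \<in> c" for c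
      using that sym unfolding edges_def by (auto simp: insert_commute)
    obtain x z where "x \<in> J" "z \<in> J" "y \<in> J" "e = {x, y}" "e' = {z, y}" "M x y" "M z y"
      using through_y[OF e y(1)] through_y[OF e'(1) y(2)] by blast
    with e'(2) sym have "(x, y, z) \<in> paths2 J M"
      unfolding paths2_def by auto
    with \<open>e = {x, y}\<close> show "e \<in> (\<lambda>(x, y, z). {x, y}) ` paths2 J M"
      by force
  qed
  then show ?thesis
    using finite_paths2[OF assms(1)] by (meson card_image_le card_mono finite_imageI le_trans)
qed

lemma card_isolated_edges_le_card_non_class_min:
  assumes "finite T" "J \<subseteq> T" and irrefl: "\<And>x. \<not> M x x"
  shows "card (isolated_edges J M) \<le> card (T - class_min T M ` T)"
proof -
  let ?I = "isolated_edges J M"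
  let ?N = "T - class_min T M ` T"
  have meets: "\<exists>x. x \<in> e \<inter> ?N" if "e \<in> edges J M" for e
  proof -
    from that obtain a b where ab: "e = {a, b}" "a \<in> T" "b \<in> T" "M a b"
      using assms(2) unfolding edges_def by blast
    then have "class_min T M a = class_min T M b"
      by (intro class_min_eq link_imp_connected_within) (simp add: link_def)
    moreover have "a \<noteq> b"
      using ab(4) irrefl by metis
    ultimately have "class_min T M a \<noteq> a \<or> class_min T M b \<noteq> b"
      by metis
    then obtain x where x: "x \<in> e" "x \<in> T" "class_min T M x \<noteq> x"
      using ab by blast
    have "x \<notin> class_min T M ` T"
    proof
      assume "x \<in> class_min T M ` T"
      then obtain y where "y \<in> T" "x = class_min T M y"
        by blast
      with x(3) show False
        using class_min_class_min[OF assms(1)] by simp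
    qed
    with x show ?thesis
      by blast
  qed
  obtain g where g: "\<And>e. e \<in> edges J M \<Longrightarrow> g e \<in> e \<inter> ?N"
    using bchoice[of "edges J M" "\<lambda>e x. x \<in> e \<inter> ?N"] meets by blast
  have "inj_on g ?I"
  proof (rule inj_onI)
    fix e e' assume e: "e \<in> ?I" and e': "e' \<in> ?I" and "g e = g e'"
    moreover have "e \<in> edges J M" "e' \<in> edges J M"
      using e e' unfolding isolated_edges_def by auto
    ultimately have "g e \<in> e \<inter> e'"
      using g by (metis IntD1 IntI)
    with e e' show "e = e'"
      unfolding isolated_edges_def by blast
  qed
  moreover have "g ` ?I \<subseteq> ?N"
  proof (rule image_subsetI)
    fix e assume "e \<in> ?I"
    then show "g e \<in> ?N"
      using g[of e] unfolding isolated_edges_def by simp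
  qed
  ultimately show ?thesis
    using assms(1) by (simp add: card_inj_on_le)
qed

lemma card_edges_le_paths2_plus_non_class_min:
  assumes "finite T" "J \<subseteq> T" "\<And>x y. M x y \<Longrightarrow> M y x" "\<And>x. \<not> M x x"
  shows "card (edges J M) \<le> card (paths2 J M) + card (T - class_min T M ` T)"
proof -
  have "finite J"
    using assms(1,2) by (rule finite_subset[rotated])
  have "card (edges J M) = card ((edges J M - isolated_edges J M) \<union> isolated_edges J M)"
    unfolding isolated_edges_def by (rule arg_cong[where f = card]) blast
  also have "\<dots> \<le> card (edges J M - isolated_edges J M) + card (isolated_edges J M)"
    by (rule card_Un_le)
  also have "card (edges J M - isolated_edges J M) \<le> card (paths2 J M)"
    using \<open>finite J\<close> assms(3) by (rule card_non_isolated_edges_le_card_paths2)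
  also have "card (isolated_edges J M) \<le> card (T - class_min T M ` T)"
    using assms(1,2,4) by (rule card_isolated_edges_le_card_non_class_min)
  finally show ?thesis
    by simp
qed

lemma walkn_Suc_snoc: "walkn E (Suc k) u v \<longleftrightarrow> (\<exists>w. walkn E k u w \<and> {w, v} \<in> E)"
  by (induction k arbitrary: u) auto

lemma walkn_sym: "walkn E k u v \<Longrightarrow> walkn E k v u"
proof (induction k arbitrary: u)
  case (Suc k)
  then obtain w where "{u, w} \<in> E" "walkn E k v w"
    by auto
  then show ?case
    using walkn_Suc_snoc by (metis insert_commute)
qed simp

lemma msim_sym: "msim \<omega> Gt u v \<Longrightarrow> msim \<omega> Gt v u"
  unfolding msim_def has_dist_def using walkn_sym by (metis insert_commute)

lemma msim_irrefl: "\<not> msim \<omega> Gt u u"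
  unfolding msim_def has_dist_def by (metis walkn.simps(1) zero_less_numeral)

lemma piu_eq_class_min: "piu \<omega> n Gt = class_min (Gen n (fst Gt)) (msim \<omega> Gt)"
  unfolding piu_def class_min_def simrel_def connected_within_def link_def Let_def by simp

lemma finite_Cset: "finite (Cset \<omega> G u)"
  by (rule finite_subset[of _ "{1..xi_of \<omega> u}"]) (auto simp: Cset_def)

lemma fst_Gtil_Suc:
  "fst (Gtil \<omega> (Suc m)) =
     fst (Gproc \<omega> m) \<union> (\<lambda>(u, i). u @ [i]) ` (SIGMA u:Iset \<omega> m. Cset \<omega> (Gproc \<omega> m) u)"
  unfolding Gtil_def tilde_graph_def Iset_def Let_def by auto

lemma fst_Gproc_Suc:
  "fst (Gproc \<omega> (Suc m)) =
     fst (Gproc \<omega> m) \<union> class_min (Itil \<omega> (Suc m)) (msim \<omega> (Gtil \<omega> (Suc m))) ` Itil \<omega> (Suc m)"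
  unfolding Itil_def Gtil_def by (simp add: next_graph_def Let_def piu_eq_class_min)

lemma finite_Gproc_length_le: "finite (fst (Gproc \<omega> m)) \<and> (\<forall>v \<in> fst (Gproc \<omega> m). length v \<le> m)"
proof (induction m)
  case (Suc m)
  let ?T = "Itil \<omega> (Suc m)"
  have "finite (Iset \<omega> m)"
    using Suc.IH unfolding Iset_def Gen_def by simp
  then have "finite (fst (Gtil \<omega> (Suc m)))"
    using Suc.IH finite_Cset unfolding fst_Gtil_Suc by blast
  then have "finite ?T"
    unfolding Itil_def Gen_def by simp
  then have "class_min ?T (msim \<omega> (Gtil \<omega> (Suc m))) ` ?T \<subseteq> ?T"
    by (rule class_min_image_subset)
  moreover have "\<forall>v \<in> ?T. length v = Suc m"
    unfolding Itil_def Gen_def by simp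
  ultimately show ?case
    using Suc.IH \<open>finite ?T\<close> unfolding fst_Gproc_Suc by (auto dest: finite_subset)
qed simp

lemma finite_Iset: "finite (Iset \<omega> m)"
  using finite_Gproc_length_le[of \<omega> m] unfolding Iset_def Gen_def by simp

lemma Itil_Suc: "Itil \<omega> (Suc m) = (\<lambda>(u, i). u @ [i]) ` (SIGMA u:Iset \<omega> m. Cset \<omega> (Gproc \<omega> m) u)"
  using finite_Gproc_length_le[of \<omega> m]
  unfolding Itil_def fst_Gtil_Suc by (auto simp: Gen_def Iset_def)

lemma finite_Itil_Suc: "finite (Itil \<omega> (Suc m))"
  unfolding Itil_Suc using finite_Iset finite_Cset by blast

lemma card_Itil_Suc: "card (Itil \<omega> (Suc m)) = Yn \<omega> (Suc m)"
proof -
  have "inj_on (\<lambda>(u, i). u @ [i]) (SIGMA u:Iset \<omega> m. Cset \<omega> (Gproc \<omega> m) u)"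
    by (rule inj_onI) auto
  then show ?thesis
    unfolding Itil_Suc Yn_def using finite_Iset finite_Cset by (simp add: card_image card_SigmaI)
qed

lemma Iset_Suc:
  "Iset \<omega> (Suc m) = class_min (Itil \<omega> (Suc m)) (msim \<omega> (Gtil \<omega> (Suc m))) ` Itil \<omega> (Suc m)"
proof -
  let ?T = "Itil \<omega> (Suc m)"
  have "class_min ?T (msim \<omega> (Gtil \<omega> (Suc m))) ` ?T \<subseteq> ?T"
    using finite_Itil_Suc by (rule class_min_image_subset)
  then show ?thesis
    using finite_Gproc_length_le[of \<omega> m]
    unfolding Iset_def fst_Gproc_Suc by (fastforce simp: Gen_def Itil_def)
qed

lemma Yn_minus_Zn_bounds:
  "int (Mt \<omega> (Suc m)) - int (Lt \<omega> (Suc m)) \<le> int (Yn \<omega> (Suc m)) - int (Zn \<omega> (Suc m))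
   \<and> int (Yn \<omega> (Suc m)) - int (Zn \<omega> (Suc m)) \<le> int (Mn \<omega> (Suc m))"
proof -
  let ?T = "Itil \<omega> (Suc m)" and ?M = "msim \<omega> (Gtil \<omega> (Suc m))"
  let ?N = "?T - class_min ?T ?M ` ?T"
  have "class_min ?T ?M ` ?T \<subseteq> ?T"
    using finite_Itil_Suc by (rule class_min_image_subset)
  then have "int (Yn \<omega> (Suc m)) - int (Zn \<omega> (Suc m)) = int (card ?N)"
    unfolding Zn_def Iset_Suc card_Itil_Suc[symmetric]
    using finite_Itil_Suc by (simp add: card_Diff_subset card_mono of_nat_diff)
  moreover have "card ?N \<le> Mn \<omega> (Suc m)"
    unfolding Mn_def using card_non_class_min_le_card_edges[OF finite_Itil_Suc]
    by (simp add: edges_def)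
  moreover have "Mt \<omega> (Suc m) \<le> Lt \<omega> (Suc m) + card ?N"
  proof -
    have "J2 \<omega> (Suc m) \<subseteq> ?T"
      unfolding J2_def by blast
    then have "card (edges (J2 \<omega> (Suc m)) ?M) \<le> card (paths2 (J2 \<omega> (Suc m)) ?M) + card ?N"
      using finite_Itil_Suc msim_sym msim_irrefl by (intro card_edges_le_paths2_plus_non_class_min)
    then show ?thesis
      unfolding Mt_def Lt_def edges_def paths2_def .
  qed
  ultimately show ?thesis
    by linarith
qed

theorem lemma5p1:
  fixes p q :: real and n :: nat
  assumes "0 \<le> p" "p \<le> 1" "0 \<le> q" "q \<le> 1" "2 \<le> n"
  shows "AE \<omega> in Pspace p q.
           int (Mt \<omega> n) - int (Lt \<omega> n) \<le> int (Yn \<omega> n) - int (Zn \<omega> n)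
         \<and> int (Yn \<omega> n) - int (Zn \<omega> n) \<le> int (Mn \<omega> n)"
proof -
  obtain m where "n = Suc m"
    using assms(5) by (cases n) auto
  then show ?thesis
    using Yn_minus_Zn_bounds by (intro AE_I2) simp
qed

end
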